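(* Let $M=\mathbb N\cup\{0\}$ with base point $0$ and metric $d(n,0)=n!$ for $n\ge1$ and $d(n,m)=n!+m!$ for distinct $n,m\ge1$. Define $f\colon M\to M$ by $f(0)=0$ and $f(n)=n-1$ for $n\ge1$. Then $f$ is Lipschitz, $f(M)=M$ is not totally bounded, and $\widehat f\colon\mathcal F(M)\to\mathcal F(M)$ is compact.
   Context: Scalars are $\mathbb K=\mathbb R$ or $\mathbb C$. For a pointed metric space $(M,d,0_M)$, $\mathrm{Lip}_0(M)$ denotes the Banach space of Lipschitz functions $g\colon M\to\mathbb K$ with $g(0_M)=0$ normed by the best Lipschitz constant; $\delta(x)\in\mathrm{Lip}_0(M)^*$ is evaluation at $x$; the Lipschitz-free space $\mathcal F(M)$ is the norm-closed linear span of $\{\delta(x):x\in M\}$ in $\mathrm{Lip}_0(M)^*$. For a Lipschitz map $f\colon M\to N$ with $f(0_M)=0_N$, $\widehat f\colon\mathcal F(M)\to\mathcal F(N)$ is the unique bounded linear operator with $\widehat f(\delta(x))=\delta(f(x))$ for all $x\in M$. *)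

theory Defs
  imports "HOL-Analysis.Analysis"
begin

definition dM :: "nat \<Rightarrow> nat \<Rightarrow> real" where
  "dM n m = (if n = m then 0 else if n = 0 then fact m else if m = 0 then fact n
             else fact n + fact m)"

definition fM :: "nat \<Rightarrow> nat" where
  "fM n = (if n = 0 then 0 else n - 1)"

definition lipschitz_map :: "('m \<Rightarrow> 'm \<Rightarrow> real) \<Rightarrow> ('m \<Rightarrow> 'm) \<Rightarrow> bool" where
  "lipschitz_map d f = (\<exists>L. \<forall>x y. d (f x) (f y) \<le> L * d x y)"

definition totally_bounded_d :: "('m \<Rightarrow> 'm \<Rightarrow> real) \<Rightarrow> 'm set \<Rightarrow> bool" where
  "totally_bounded_d d A = (\<forall>e>0. \<exists>S. finite S \<and> S \<subseteq> A \<and> (\<forall>x\<in>A. \<exists>s\<in>S. d x s < e))"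

definition lip_ratios :: "('m \<Rightarrow> 'm \<Rightarrow> real) \<Rightarrow> ('m \<Rightarrow> 'k::real_normed_vector) \<Rightarrow> real set" where
  "lip_ratios d g = (\<lambda>(x, y). norm (g x - g y) / d x y) ` {(x, y). x \<noteq> y}"

definition Lip0 :: "('m \<Rightarrow> 'm \<Rightarrow> real) \<Rightarrow> 'm \<Rightarrow> ('m \<Rightarrow> 'k::real_normed_field) set" where
  "Lip0 d z = {g. g z = 0 \<and> bdd_above (lip_ratios d g)}"

definition lipnorm :: "('m \<Rightarrow> 'm \<Rightarrow> real) \<Rightarrow> ('m \<Rightarrow> 'k::real_normed_vector) \<Rightarrow> real" where
  "lipnorm d g = Sup (insert 0 (lip_ratios d g))"

definition Lip0_ball :: "('m \<Rightarrow> 'm \<Rightarrow> real) \<Rightarrow> 'm \<Rightarrow> ('m \<Rightarrow> 'k::real_normed_field) set" where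
  "Lip0_ball d z = {g \<in> Lip0 d z. lipnorm d g \<le> 1}"

text \<open>Elements of Lip_0(M)^* are represented by functions on (scalar) functions; only
  their values on Lip_0(M) matter.  Dual norm:\<close>
definition dnorm :: "('m \<Rightarrow> 'm \<Rightarrow> real) \<Rightarrow> 'm \<Rightarrow> (('m \<Rightarrow> 'k::real_normed_field) \<Rightarrow> 'k) \<Rightarrow> real" where
  "dnorm d z \<phi> = Sup ((\<lambda>g. norm (\<phi> g)) ` Lip0_ball d z)"

definition Lip0_dual :: "('m \<Rightarrow> 'm \<Rightarrow> real) \<Rightarrow> 'm \<Rightarrow> (('m \<Rightarrow> 'k::real_normed_field) \<Rightarrow> 'k) set" where
  "Lip0_dual d z = {\<phi>.
     (\<forall>g\<in>Lip0 d z. \<forall>h\<in>Lip0 d z. \<forall>a b. \<phi> (\<lambda>x. a * g x + b * h x) = a * \<phi> g + b * \<phi> h)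
     \<and> bdd_above ((\<lambda>g. norm (\<phi> g)) ` Lip0_ball d z)}"

definition delta :: "'m \<Rightarrow> (('m \<Rightarrow> 'k) \<Rightarrow> 'k)" where
  "delta x = (\<lambda>g. g x)"

definition delta_span :: "(('m \<Rightarrow> 'k::real_normed_field) \<Rightarrow> 'k) set" where
  "delta_span = {(\<lambda>g. \<Sum>x\<in>S. c x * delta x g) | S c. finite S}"

definition free_space :: "('m \<Rightarrow> 'm \<Rightarrow> real) \<Rightarrow> 'm \<Rightarrow> (('m \<Rightarrow> 'k::real_normed_field) \<Rightarrow> 'k) set" where
  "free_space d z = {\<phi> \<in> Lip0_dual d z.
      \<forall>e>0. \<exists>\<psi>\<in>delta_span. dnorm d z (\<lambda>g. \<phi> g - \<psi> g) < e}"

definition dual_eq :: "('m \<Rightarrow> 'm \<Rightarrow> real) \<Rightarrow> 'm \<Rightarrow> (('m \<Rightarrow> 'k::real_normed_field) \<Rightarrow> 'k)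
                       \<Rightarrow> (('m \<Rightarrow> 'k) \<Rightarrow> 'k) \<Rightarrow> bool" where
  "dual_eq d z \<phi> \<psi> = (\<forall>g\<in>Lip0 d z. \<phi> g = \<psi> g)"

definition is_linearization ::
  "('m \<Rightarrow> 'm \<Rightarrow> real) \<Rightarrow> 'm \<Rightarrow> ('m \<Rightarrow> 'm)
   \<Rightarrow> ((('m \<Rightarrow> 'k::real_normed_field) \<Rightarrow> 'k) \<Rightarrow> (('m \<Rightarrow> 'k) \<Rightarrow> 'k)) \<Rightarrow> bool" where
  "is_linearization d z f T =
     ((\<forall>\<phi>\<in>free_space d z. T \<phi> \<in> free_space d z)
      \<and> (\<forall>\<phi>\<in>free_space d z. \<forall>\<psi>\<in>free_space d z. \<forall>a b.
            dual_eq d z (T (\<lambda>g. a * \<phi> g + b * \<psi> g)) (\<lambda>g. a * T \<phi> g + b * T \<psi> g))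
      \<and> (\<exists>C. \<forall>\<phi>\<in>free_space d z. dnorm d z (T \<phi>) \<le> C * dnorm d z \<phi>)
      \<and> (\<forall>x. dual_eq d z (T (delta x)) (delta (f x))))"

text \<open>Compact operator on F(M): the image of the closed unit ball is relatively compact,
  stated sequentially.\<close>
definition compact_op ::
  "('m \<Rightarrow> 'm \<Rightarrow> real) \<Rightarrow> 'm
   \<Rightarrow> ((('m \<Rightarrow> 'k::real_normed_field) \<Rightarrow> 'k) \<Rightarrow> (('m \<Rightarrow> 'k) \<Rightarrow> 'k)) \<Rightarrow> bool" where
  "compact_op d z T =
     (\<forall>s :: nat \<Rightarrow> (('m \<Rightarrow> 'k) \<Rightarrow> 'k). (\<forall>n. s n \<in> free_space d z \<and> dnorm d z (s n) \<le> 1) \<longrightarrow>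
        (\<exists>r \<psi>. strict_mono r \<and> \<psi> \<in> free_space d z \<and>
           (\<lambda>n. dnorm d z (\<lambda>g. T (s (r n)) g - \<psi> g)) \<longlonglongrightarrow> 0))"

end

theory Submission
  imports Defs "HOL-Library.Diagonal_Subsequence"
begin

(* The unit ball of Lip_0(M) consists exactly of the functions g with g 0 = 0 and |g n| <= n!,
   so F(M) is the weighted l^1 space in which the sum of b_n delta(n) has norm the sum over n >= 1
   of |b_n| n!.  In these coordinates the linearization of f shifts coefficients,
   delta(n) |-> delta(n - 1), so it maps the unit ball into a bounded set of the l^1 space with the
   stronger weights n! = n (n - 1)!.  That set is relatively compact because the ratio of the two
   weights, 1/n, tends to 0: a diagonal argument gives coefficientwise convergence, and tails beyond
   N are uniformly O(1/N).  M itself is not totally bounded since distinct points are at distance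
   at least 1. *)

section \<open>Compactness of weighted summable sequences\<close>

lemma bounded_pointwise_convergent_subsequence:
  fixes a :: "nat \<Rightarrow> nat \<Rightarrow> 'a::heine_borel"
  assumes "\<And>m. bounded (range (\<lambda>k. a k m))"
  obtains r b where "strict_mono r" "\<And>m. (\<lambda>k. a (r k) m) \<longlonglongrightarrow> b m"
proof -
  interpret subseqs "\<lambda>m s. \<exists>l. (\<lambda>k. a (s k) m) \<longlonglongrightarrow> l"
  proof unfold_locales
    fix m and s :: "nat \<Rightarrow> nat"
    have "bounded (range (\<lambda>k. a (s k) m))"
      using assms[of m] by (rule bounded_subset) auto
    then obtain l r where "strict_mono r" "((\<lambda>k. a (s k) m) \<circ> r) \<longlonglongrightarrow> l"
      using bounded_imp_convergent_subsequence by blast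
    then show "\<exists>r. strict_mono r \<and> (\<exists>l. (\<lambda>k. a ((s \<circ> r) k) m) \<longlonglongrightarrow> l)"
      by (auto simp: o_def)
  qed
  have "\<exists>l. (\<lambda>k. a (diagseq k) m) \<longlonglongrightarrow> l" for m
  proof -
    obtain l where "(\<lambda>i. a ((diagseq \<circ> (+) (Suc m)) i) m) \<longlonglongrightarrow> l"
    proof (atomize_elim, rule diagseq_holds)
      fix r s n
      assume "strict_mono (r :: nat \<Rightarrow> nat)" "\<exists>l. (\<lambda>k. a (s k) n) \<longlonglongrightarrow> l"
      then show "\<exists>l. (\<lambda>k. a ((s \<circ> r) k) n) \<longlonglongrightarrow> l"
        using LIMSEQ_subseq_LIMSEQ[of "\<lambda>k. a (s k) n"] by (auto simp: o_def)
    qed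
    then have "(\<lambda>i. a (diagseq (i + Suc m)) m) \<longlonglongrightarrow> l"
      by (simp add: ac_simps)
    then show ?thesis
      using LIMSEQ_offset[of "\<lambda>k. a (diagseq k) m"] by blast
  qed
  then have "\<exists>b. \<forall>m. (\<lambda>k. a (diagseq k) m) \<longlonglongrightarrow> b m"
    by (rule choice[OF allI])
  then obtain b where "\<forall>m. (\<lambda>k. a (diagseq k) m) \<longlonglongrightarrow> b m" ..
  with subseq_diagseq show thesis
    using that by blast
qed

lemma suminf_tail_le:
  fixes c :: "nat \<Rightarrow> real"
  assumes summable: "summable (\<lambda>m. c m * real (Suc m))" and nonneg: "\<And>m. 0 \<le> c m"
  shows "(\<Sum>i. c (i + N)) \<le> (\<Sum>m. c m * real (Suc m)) / real (Suc N)"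
proof -
  let ?t = "\<lambda>i. c (i + N) * real (Suc (i + N))"
  have t: "summable ?t"
    using summable_ignore_initial_segment[OF summable, of N] by simp
  have le: "c (i + N) \<le> ?t i / real (Suc N)" for i
    using nonneg[of "i + N"] by (simp add: le_divide_eq mult_left_mono)
  have "(\<Sum>i. c (i + N)) \<le> (\<Sum>i. ?t i / real (Suc N))"
  proof (rule suminf_le[OF le])
    show "summable (\<lambda>i. ?t i / real (Suc N))"
      using t by (rule summable_divide)
    then show "summable (\<lambda>i. c (i + N))"
      by (rule summable_comparison_test'[where N=0]) (use le nonneg in auto)
  qed
  also have "\<dots> = suminf ?t / real (Suc N)"
    using t by (rule suminf_divide)
  also have "\<dots> \<le> (\<Sum>m. c m * real (Suc m)) / real (Suc N)"
  proof (rule divide_right_mono)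
    have "0 \<le> (\<Sum>m<N. c m * real (Suc m))"
      using nonneg by (intro sum_nonneg) simp
    then show "suminf ?t \<le> (\<Sum>m. c m * real (Suc m))"
      using suminf_split_initial_segment[OF summable, of N] by simp
  qed simp
  finally show ?thesis .
qed

lemma tendsto_zero_by_approximation:
  fixes E :: "nat \<Rightarrow> real"
  assumes nonneg: "\<And>k. 0 \<le> E k" and le: "\<And>N k. E k \<le> h N k + t N"
    and h: "\<And>N. (\<lambda>k. h N k) \<longlonglongrightarrow> 0" and t: "t \<longlonglongrightarrow> 0"
  shows "E \<longlonglongrightarrow> 0"
proof (rule LIMSEQ_I)
  fix \<epsilon> :: real assume "0 < \<epsilon>"
  then obtain N where N: "t N < \<epsilon> / 2"
    using order_tendstoD(2)[OF t, of "\<epsilon> / 2"] by (auto simp: eventually_sequentially)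
  obtain k0 where k0: "\<And>k. k \<ge> k0 \<Longrightarrow> h N k < \<epsilon> / 2"
    using order_tendstoD(2)[OF h, of "\<epsilon> / 2" N] \<open>0 < \<epsilon>\<close> by (auto simp: eventually_sequentially)
  have "norm (E k - 0) < \<epsilon>" if "k \<ge> k0" for k
    using le[of k N] k0[OF that] N nonneg[of k] by simp
  then show "\<exists>k0. \<forall>k\<ge>k0. norm (E k - 0) < \<epsilon>"
    by blast
qed

lemma weighted_l1_diff_tail_le:
  fixes x y :: "nat \<Rightarrow> 'a::real_normed_vector"
  assumes x: "\<And>N. (\<Sum>m<N. norm (x m) * (real (Suc m) * u m)) \<le> B"
    and y: "\<And>N. (\<Sum>m<N. norm (y m) * (real (Suc m) * u m)) \<le> B"
    and u: "\<And>m. 0 \<le> u m"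
  shows "summable (\<lambda>m. norm (x m - y m) * u m)"
    and "(\<Sum>i. norm (x (i + N) - y (i + N)) * u (i + N)) \<le> 2 * B / real (Suc N)"
proof -
  define w where "w m = real (Suc m) * u m" for m
  define c where "c m = norm (x m - y m) * u m" for m
  have w: "0 \<le> w m" and c: "0 \<le> c m" for m
    using u by (simp_all add: w_def c_def)
  have xw: "(\<Sum>m<N. norm (x m) * w m) \<le> B" and yw: "(\<Sum>m<N. norm (y m) * w m) \<le> B" for N
    using x y by (simp_all add: w_def)
  have sx: "summable (\<lambda>m. norm (x m) * w m)"
    by (rule summableI_nonneg_bounded[OF _ xw]) (simp add: w)
  have sy: "summable (\<lambda>m. norm (y m) * w m)"
    by (rule summableI_nonneg_bounded[OF _ yw]) (simp add: w)
  have c_le: "c m * real (Suc m) \<le> norm (x m) * w m + norm (y m) * w m" for m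
    using mult_right_mono[OF norm_triangle_ineq4[of "x m" "y m"] w[of m]]
    by (simp add: c_def w_def algebra_simps)
  have sc: "summable (\<lambda>m. c m * real (Suc m))"
    by (rule summable_comparison_test'[OF summable_add[OF sx sy], where N=0]) (use c c_le in auto)
  have "summable c"
  proof (rule summable_comparison_test'[OF sc, where N=0])
    show "norm (c m) \<le> c m * real (Suc m)" for m
      using c[of m] by (simp add: mult_le_cancel_left1)
  qed
  then show "summable (\<lambda>m. norm (x m - y m) * u m)"
    by (simp add: c_def[abs_def])
  have "(\<Sum>m. c m * real (Suc m)) \<le> (\<Sum>m. norm (x m) * w m) + (\<Sum>m. norm (y m) * w m)"
    using suminf_le[OF c_le sc summable_add[OF sx sy]] suminf_add[OF sx sy] by simp
  also have "\<dots> \<le> B + B"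
    using suminf_le_const[OF sx xw] suminf_le_const[OF sy yw] by (rule add_mono)
  finally have "(\<Sum>m. c m * real (Suc m)) / real (Suc N) \<le> 2 * B / real (Suc N)"
    by (simp add: divide_right_mono)
  with suminf_tail_le[OF sc c] show "(\<Sum>i. norm (x (i + N) - y (i + N)) * u (i + N)) \<le> 2 * B / real (Suc N)"
    unfolding c_def by (rule order_trans)
qed

lemma weighted_l1_tendsto:
  fixes a :: "nat \<Rightarrow> nat \<Rightarrow> 'a::real_normed_vector"
  assumes conv: "\<And>m. (\<lambda>k. a k m) \<longlonglongrightarrow> b m"
    and bound: "\<And>k N. (\<Sum>m<N. norm (a k m) * (real (Suc m) * u m)) \<le> B"
    and u: "\<And>m. 0 \<le> u m"
  shows "summable (\<lambda>m. norm (b m) * (real (Suc m) * u m))"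
    and "summable (\<lambda>m. norm (a k m - b m) * u m)"
    and "(\<lambda>k. \<Sum>m. norm (a k m - b m) * u m) \<longlonglongrightarrow> 0"
proof -
  have bound_b: "(\<Sum>m<N. norm (b m) * (real (Suc m) * u m)) \<le> B" for N
    by (rule LIMSEQ_le_const2[OF tendsto_sum[OF tendsto_mult_right[OF tendsto_norm[OF conv]]]])
      (use bound in auto)
  then show "summable (\<lambda>m. norm (b m) * (real (Suc m) * u m))"
    using u by (intro summableI_nonneg_bounded) auto
  note diff = weighted_l1_diff_tail_le[OF bound bound_b u]
  show "summable (\<lambda>m. norm (a k m - b m) * u m)"
    by (rule diff(1))
  show "(\<lambda>k. \<Sum>m. norm (a k m - b m) * u m) \<longlonglongrightarrow> 0"
  proof (rule tendsto_zero_by_approximation)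
    show "(\<Sum>m. norm (a k m - b m) * u m)
        \<le> (\<Sum>m<N. norm (a k m - b m) * u m) + 2 * B / real (Suc N)" for k N
      using suminf_split_initial_segment[OF diff(1)[of k], of N] diff(2)[of k N] by simp
    show "(\<lambda>k. \<Sum>m<N. norm (a k m - b m) * u m) \<longlonglongrightarrow> 0" for N
    proof -
      have "(\<lambda>k. \<Sum>m<N. norm (a k m - b m) * u m) \<longlonglongrightarrow> (\<Sum>m<N. norm (b m - b m) * u m)"
        by (intro tendsto_intros conv)
      then show ?thesis
        by simp
    qed
    show "(\<lambda>N. 2 * B / real (Suc N)) \<longlonglongrightarrow> 0"
      using LIMSEQ_Suc[OF lim_const_over_n[of "2 * B"]] by simp
  qed (use u in \<open>simp add: suminf_nonneg[OF diff(1)]\<close>)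
qed

lemma weighted_l1_compact:
  fixes a :: "nat \<Rightarrow> nat \<Rightarrow> 'a::{real_normed_vector, heine_borel}"
  assumes bound: "\<And>k N. (\<Sum>m<N. norm (a k m) * (real (Suc m) * u m)) \<le> B"
    and u: "\<And>m. 0 < u m"
  obtains r b where "strict_mono r" "summable (\<lambda>m. norm (b m) * u m)"
    "\<And>k. summable (\<lambda>m. norm (a (r k) m - b m) * u m)"
    "(\<lambda>k. \<Sum>m. norm (a (r k) m - b m) * u m) \<longlonglongrightarrow> 0"
proof -
  have "norm (a k m) \<le> B / (real (Suc m) * u m)" for k m
  proof -
    have "norm (a k m) * (real (Suc m) * u m) \<le> (\<Sum>j<Suc m. norm (a k j) * (real (Suc j) * u j))"
      using u by (intro member_le_sum) (simp_all add: less_imp_le)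
    also have "\<dots> \<le> B" by (rule bound)
    finally show ?thesis
      using u[of m] by (simp add: le_divide_eq)
  qed
  then have "bounded (range (\<lambda>k. a k m))" for m
    unfolding bounded_iff by blast
  then obtain r b where r: "strict_mono r" and conv: "\<And>m. (\<lambda>k. a (r k) m) \<longlonglongrightarrow> b m"
    using bounded_pointwise_convergent_subsequence[of a] by blast
  note l1 = weighted_l1_tendsto[of "\<lambda>k. a (r k)", OF conv bound less_imp_le[OF u]]
  have "summable (\<lambda>m. norm (b m) * u m)"
  proof (rule summable_comparison_test'[OF l1(1), where N=0])
    show "norm (norm (b m) * u m) \<le> norm (b m) * (real (Suc m) * u m)" for m
      using u[of m] by (simp add: abs_mult less_imp_le mult_left_mono)
  qed
  then show thesis
    using that r l1(2,3) by blast
qed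

section \<open>The metric space and the unit ball of Lip_0(M)\<close>

abbreviation unit_ball :: "(nat \<Rightarrow> 'k::real_normed_field) set" where
  "unit_ball \<equiv> Lip0_ball dM 0"

lemma dM_pos: "x \<noteq> y \<Longrightarrow> 0 < dM x y"
  by (simp add: dM_def add_pos_pos)

lemma dM_fM_le: "dM (fM x) (fM y) \<le> dM x y"
proof -
  have "fact (n - 1) \<le> (fact n :: real)" for n
    by (rule fact_mono) simp
  then show ?thesis
    by (auto simp: dM_def fM_def intro: add_mono add_increasing add_increasing2)
qed

lemma dM_ge_1: "x \<noteq> y \<Longrightarrow> 1 \<le> dM x y"
  by (auto simp: dM_def fact_ge_1 add_increasing2)

lemma lipschitz_map_fM: "lipschitz_map dM fM"
  unfolding lipschitz_map_def using dM_fM_le by (intro exI[of _ 1]) simp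

lemma surj_fM: "fM ` UNIV = UNIV"
  by (rule surjI[of _ Suc]) (simp add: fM_def)

lemma not_totally_bounded_dM: "\<not> totally_bounded_d dM UNIV"
proof
  assume "totally_bounded_d dM UNIV"
  then obtain S where "finite S" and S: "\<forall>x. \<exists>s\<in>S. dM x s < 1"
    unfolding totally_bounded_d_def by (metis zero_less_one UNIV_I)
  obtain n where "n \<notin> S"
    using \<open>finite S\<close> ex_new_if_finite[OF infinite_UNIV_nat] by blast
  with S dM_ge_1 show False
    by (metis not_le)
qed

lemma lip_ratios_dM_le_iff:
  fixes g :: "nat \<Rightarrow> 'k::real_normed_field"
  assumes "g 0 = 0" "0 \<le> L"
  shows "(\<forall>r\<in>lip_ratios dM g. r \<le> L) \<longleftrightarrow> (\<forall>n. norm (g n) \<le> L * fact n)"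
proof
  assume L: "\<forall>r\<in>lip_ratios dM g. r \<le> L"
  show "\<forall>n. norm (g n) \<le> L * fact n"
  proof
    fix n
    show "norm (g n) \<le> L * fact n"
    proof (cases "n = 0")
      case False
      then have "norm (g n - g 0) / dM n 0 \<in> lip_ratios dM g"
        unfolding lip_ratios_def by (intro image_eqI[where x="(n, 0)"]) auto
      with L False assms show ?thesis by (auto simp: dM_def divide_le_eq)
    qed (use assms L in \<open>auto simp: lip_ratios_def\<close>)
  qed
next
  assume L: "\<forall>n. norm (g n) \<le> L * fact n"
  have "norm (g x - g y) \<le> L * dM x y" if "x \<noteq> y" for x y
  proof -
    have "norm (g x - g y) \<le> norm (g x) + norm (g y)" by (rule norm_triangle_ineq4)
    with L[rule_format, of x] L[rule_format, of y] that assms show ?thesis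
      by (auto simp: dM_def distrib_left)
  qed
  then show "\<forall>r\<in>lip_ratios dM g. r \<le> L"
    by (auto simp: lip_ratios_def divide_le_eq dM_pos mult.commute)
qed

lemma Lip0_dM_iff:
  fixes g :: "nat \<Rightarrow> 'k::real_normed_field"
  shows "g \<in> Lip0 dM 0 \<longleftrightarrow> g 0 = 0 \<and> (\<exists>L\<ge>0. \<forall>n. norm (g n) \<le> L * fact n)"
proof -
  have "bdd_above (lip_ratios dM g) \<longleftrightarrow> (\<exists>L\<ge>0. \<forall>r\<in>lip_ratios dM g. r \<le> L)"
    unfolding bdd_above_def by (metis max.cobounded2 max.coboundedI1)
  then show ?thesis
    unfolding Lip0_def by (simp add: lip_ratios_dM_le_iff cong: conj_cong)
qed

lemma Lip0_ball_dM_iff: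
  fixes g :: "nat \<Rightarrow> 'k::real_normed_field"
  shows "g \<in> unit_ball \<longleftrightarrow> g 0 = 0 \<and> (\<forall>n. norm (g n) \<le> fact n)"
proof -
  have "g \<in> unit_ball \<longleftrightarrow> g 0 = 0 \<and> (\<forall>r\<in>lip_ratios dM g. r \<le> 1)"
  proof -
    have "lipnorm dM g \<le> 1 \<longleftrightarrow> (\<forall>r\<in>lip_ratios dM g. r \<le> 1)"
      if "bdd_above (lip_ratios dM g)"
      unfolding lipnorm_def using that by (subst cSup_le_iff) auto
    then show ?thesis
      unfolding Lip0_ball_def Lip0_def bdd_above_def by auto
  qed
  then show ?thesis
    using lip_ratios_dM_le_iff[of g 1] by auto
qed

lemma Lip0_ball_subset: "unit_ball \<subseteq> Lip0 dM 0"
  by (auto simp: Lip0_ball_def)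

section \<open>The dual norm and the free space\<close>

abbreviation ball_bounded :: "((nat \<Rightarrow> 'k::real_normed_field) \<Rightarrow> 'k) \<Rightarrow> bool" where
  "ball_bounded \<phi> \<equiv> bdd_above ((\<lambda>g. norm (\<phi> g)) ` unit_ball)"

lemma zero_in_unit_ball: "(\<lambda>_. 0) \<in> unit_ball"
  by (simp add: Lip0_ball_dM_iff)

lemma norm_le_dnorm: "ball_bounded \<phi> \<Longrightarrow> g \<in> unit_ball \<Longrightarrow> norm (\<phi> g) \<le> dnorm dM 0 \<phi>"
  unfolding dnorm_def by (rule cSup_upper) auto

lemma dnorm_le: "(\<And>g. g \<in> unit_ball \<Longrightarrow> norm (\<phi> g) \<le> B) \<Longrightarrow> dnorm dM 0 \<phi> \<le> B"
  unfolding dnorm_def using zero_in_unit_ball by (intro cSup_least) auto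

lemma dnorm_nonneg: "ball_bounded \<phi> \<Longrightarrow> 0 \<le> dnorm dM 0 \<phi>"
  using norm_le_dnorm[OF _ zero_in_unit_ball, of \<phi>] norm_ge_zero order_trans by blast

lemma norm_diff_le_dnorm:
  assumes "ball_bounded \<phi>" "ball_bounded \<psi>" "g \<in> unit_ball"
  shows "norm (\<phi> g - \<psi> g) \<le> dnorm dM 0 \<phi> + dnorm dM 0 \<psi>"
  using norm_triangle_ineq4[of "\<phi> g" "\<psi> g"] norm_le_dnorm[OF assms(1,3)] norm_le_dnorm[OF assms(2,3)]
  by linarith

lemma dnorm_diff_le:
  "ball_bounded \<phi> \<Longrightarrow> ball_bounded \<psi> \<Longrightarrow> dnorm dM 0 (\<lambda>g. \<phi> g - \<psi> g) \<le> dnorm dM 0 \<phi> + dnorm dM 0 \<psi>"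
  by (rule dnorm_le) (rule norm_diff_le_dnorm)

lemma Lip0_dual_ball_bounded: "\<phi> \<in> Lip0_dual dM 0 \<Longrightarrow> ball_bounded \<phi>"
  by (simp add: Lip0_dual_def)

lemma free_space_Lip0_dual: "\<phi> \<in> free_space d z \<Longrightarrow> \<phi> \<in> Lip0_dual d z"
  by (simp add: free_space_def)

lemma dnorm_tendsto_zero:
  assumes "\<And>k g. g \<in> unit_ball \<Longrightarrow> norm (\<phi> k g) \<le> b k" and "b \<longlonglongrightarrow> 0"
  shows "(\<lambda>k. dnorm dM 0 (\<phi> k)) \<longlonglongrightarrow> 0"
proof (rule tendsto_sandwich[OF _ _ tendsto_const \<open>b \<longlonglongrightarrow> 0\<close>])
  show "\<forall>\<^sub>F k in sequentially. 0 \<le> dnorm dM 0 (\<phi> k)"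
    using assms(1) by (intro always_eventually allI dnorm_nonneg bdd_aboveI2) blast
  show "\<forall>\<^sub>F k in sequentially. dnorm dM 0 (\<phi> k) \<le> b k"
    using assms(1) by (intro always_eventually allI dnorm_le) auto
qed

lemma Lip0_dual_diff:
  fixes \<phi> \<psi> :: "(nat \<Rightarrow> 'k::real_normed_field) \<Rightarrow> 'k"
  assumes "\<phi> \<in> Lip0_dual dM 0" "\<psi> \<in> Lip0_dual dM 0"
  shows "(\<lambda>g. \<phi> g - \<psi> g) \<in> Lip0_dual dM 0"
  unfolding Lip0_dual_def
proof (intro CollectI conjI ballI allI)
  fix g h :: "nat \<Rightarrow> 'k" and a b :: 'k
  assume "g \<in> Lip0 dM 0" "h \<in> Lip0 dM 0"
  with assms show "\<phi> (\<lambda>x. a * g x + b * h x) - \<psi> (\<lambda>x. a * g x + b * h x) =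
      a * (\<phi> g - \<psi> g) + b * (\<phi> h - \<psi> h)"
    by (simp add: Lip0_dual_def algebra_simps)
next
  show "bdd_above ((\<lambda>g. norm (\<phi> g - \<psi> g)) ` unit_ball)"
    using norm_diff_le_dnorm[OF Lip0_dual_ball_bounded[OF assms(1)] Lip0_dual_ball_bounded[OF assms(2)]]
    by (intro bdd_aboveI2)
qed

lemma delta_sum_Lip0_dual:
  fixes c :: "nat \<Rightarrow> 'k::real_normed_field"
  assumes "finite S"
  shows "(\<lambda>g. \<Sum>x\<in>S. c x * delta x g) \<in> Lip0_dual dM 0"
  unfolding Lip0_dual_def
proof (intro CollectI conjI ballI allI)
  fix g h a b
  show "(\<Sum>x\<in>S. c x * delta x (\<lambda>x. a * g x + b * h x)) =
      a * (\<Sum>x\<in>S. c x * delta x g) + b * (\<Sum>x\<in>S. c x * delta x h)"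
    by (simp add: delta_def sum_distrib_left sum.distrib algebra_simps)
next
  have "norm (\<Sum>x\<in>S. c x * delta x g) \<le> (\<Sum>x\<in>S. norm (c x) * fact x)" if "g \<in> unit_ball" for g
    using that unfolding Lip0_ball_dM_iff delta_def
    by (intro order_trans[OF norm_sum] sum_mono) (simp add: norm_mult mult_left_mono)
  then show "bdd_above ((\<lambda>g. norm (\<Sum>x\<in>S. c x * delta x g)) ` unit_ball)"
    by (intro bdd_aboveI2)
qed

lemma dnorm_zero: "dnorm dM 0 (\<lambda>g::nat \<Rightarrow> 'k::real_normed_field. 0::'k) = 0"
  unfolding dnorm_def using zero_in_unit_ball by (subst cSUP_const) auto

lemma delta_sum_free_space:
  fixes c :: "nat \<Rightarrow> 'k::real_normed_field"
  assumes "finite S"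
  shows "(\<lambda>g. \<Sum>x\<in>S. c x * delta x g) \<in> free_space dM 0"
  unfolding free_space_def using delta_sum_Lip0_dual[OF assms] assms
  by (auto simp: delta_span_def dnorm_zero intro!: exI[of _ "\<lambda>g. \<Sum>x\<in>S. c x * delta x g"])

lemma delta_free_space: "(delta x :: (nat \<Rightarrow> 'k::real_normed_field) \<Rightarrow> 'k) \<in> free_space dM 0"
  using delta_sum_free_space[of "{x}" "\<lambda>_. 1"] by (simp add: delta_def)

lemma delta_span_diff:
  assumes "\<phi> \<in> delta_span" "\<psi> \<in> delta_span"
  shows "(\<lambda>g. \<phi> g - \<psi> g) \<in> delta_span"
proof -
  obtain S c T d where ST: "finite S" "finite T"
    and eq: "\<phi> = (\<lambda>g. \<Sum>x\<in>S. c x * delta x g)" "\<psi> = (\<lambda>g. \<Sum>x\<in>T. d x * delta x g)"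
    using assms unfolding delta_span_def by blast
  define e where "e x = (if x \<in> S then c x else 0) - (if x \<in> T then d x else 0)" for x
  have "\<phi> g - \<psi> g = (\<Sum>x\<in>S \<union> T. e x * delta x g)" for g
  proof -
    have "\<phi> g - \<psi> g = (\<Sum>x\<in>S \<union> T. if x \<in> S then c x * delta x g else 0)
        - (\<Sum>x\<in>S \<union> T. if x \<in> T then d x * delta x g else 0)"
      using ST by (simp add: eq sum.inter_restrict[symmetric] Int_absorb1)
    also have "\<dots> = (\<Sum>x\<in>S \<union> T. e x * delta x g)"
      by (subst sum_subtractf[symmetric]) (auto simp: e_def left_diff_distrib intro!: sum.cong)
    finally show ?thesis .
  qed
  then show ?thesis
    unfolding delta_span_def using ST by blast
qed

lemma delta_span_Lip0_dual: "\<psi> \<in> delta_span \<Longrightarrow> \<psi> \<in> Lip0_dual dM 0"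
  unfolding delta_span_def using delta_sum_Lip0_dual by blast

lemma free_space_approx:
  "\<phi> \<in> free_space dM 0 \<Longrightarrow> 0 < e \<Longrightarrow> \<exists>\<psi>\<in>delta_span. dnorm dM 0 (\<lambda>g. \<phi> g - \<psi> g) < e"
  unfolding free_space_def by blast

lemma free_space_diff:
  fixes \<phi> \<psi> :: "(nat \<Rightarrow> 'k::real_normed_field) \<Rightarrow> 'k"
  assumes \<phi>: "\<phi> \<in> free_space dM 0" and \<psi>: "\<psi> \<in> free_space dM 0"
  shows "(\<lambda>g. \<phi> g - \<psi> g) \<in> free_space dM 0"
proof -
  have "\<exists>\<theta>\<in>delta_span. dnorm dM 0 (\<lambda>g. (\<phi> g - \<psi> g) - \<theta> g) < e" if "e > 0" for e
  proof -
    obtain p where p: "p \<in> delta_span" "dnorm dM 0 (\<lambda>g. \<phi> g - p g) < e / 2"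
      using free_space_approx[OF \<phi>, of "e / 2"] \<open>e > 0\<close> by auto
    obtain q where q: "q \<in> delta_span" "dnorm dM 0 (\<lambda>g. \<psi> g - q g) < e / 2"
      using free_space_approx[OF \<psi>, of "e / 2"] \<open>e > 0\<close> by auto
    note pq = p(1) q(1)
    have "dnorm dM 0 (\<lambda>g. (\<phi> g - \<psi> g) - (p g - q g))
        \<le> dnorm dM 0 (\<lambda>g. \<phi> g - p g) + dnorm dM 0 (\<lambda>g. \<psi> g - q g)"
      using dnorm_diff_le[of "\<lambda>g. \<phi> g - p g" "\<lambda>g. \<psi> g - q g"] \<phi> \<psi> pq
      by (simp add: algebra_simps Lip0_dual_ball_bounded Lip0_dual_diff delta_span_Lip0_dual
          free_space_Lip0_dual)
    then show ?thesis
      using p q delta_span_diff[OF pq] by (intro bexI[of _ "\<lambda>g. p g - q g"]) auto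
  qed
  then show ?thesis
    using Lip0_dual_diff[OF free_space_Lip0_dual[OF \<phi>] free_space_Lip0_dual[OF \<psi>]]
    unfolding free_space_def by blast
qed

lemma linearization_linear:
  assumes "is_linearization dM 0 f T" "\<phi> \<in> free_space dM 0" "\<psi> \<in> free_space dM 0"
    and "g \<in> Lip0 dM 0"
  shows "T (\<lambda>g. a * \<phi> g + b * \<psi> g) g = a * T \<phi> g + b * T \<psi> g"
  using assms unfolding is_linearization_def dual_eq_def by blast

lemma linearization_delta:
  "is_linearization dM 0 f T \<Longrightarrow> g \<in> Lip0 dM 0 \<Longrightarrow> T (delta x) g = g (f x)"
  unfolding is_linearization_def dual_eq_def delta_def by blast

lemma linearization_delta_sum:
  fixes T :: "((nat \<Rightarrow> 'k::real_normed_field) \<Rightarrow> 'k) \<Rightarrow> ((nat \<Rightarrow> 'k) \<Rightarrow> 'k)"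
  assumes T: "is_linearization dM 0 f T" and "finite S" and g: "g \<in> Lip0 dM 0"
  shows "T (\<lambda>g. \<Sum>x\<in>S. c x * delta x g) g = (\<Sum>x\<in>S. c x * g (f x))"
  using \<open>finite S\<close>
proof (induction S rule: finite_induct)
  case empty
  show ?case
    using linearization_linear[OF T delta_free_space delta_free_space g, of 0 0 0 0] by simp
next
  case (insert x S)
  then show ?case
    using linearization_linear[OF T delta_sum_free_space[OF insert(1)] delta_free_space g, of 1 c]
      linearization_delta[OF T g]
    by (simp add: delta_def add.commute)
qed

section \<open>Coefficient functionals\<close>

(* coef_functional \<beta> represents the element \<Sum>\<^sub>m \<beta> m \<delta>(m) of F(M). *)
definition coef_functional :: "(nat \<Rightarrow> 'k) \<Rightarrow> (nat \<Rightarrow> 'k) \<Rightarrow> 'k::real_normed_field" where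
  "coef_functional \<beta> g = (\<Sum>m. \<beta> m * g m)"

lemma coef_functional_summable:
  fixes \<beta> g :: "nat \<Rightarrow> 'k::{real_normed_field, banach}"
  assumes \<beta>: "summable (\<lambda>m. norm (\<beta> m) * fact m)" and g: "g \<in> Lip0 dM 0"
  shows "summable (\<lambda>m. \<beta> m * g m)"
proof -
  obtain L where L: "\<And>n. norm (g n) \<le> L * fact n"
    using g unfolding Lip0_dM_iff by blast
  show ?thesis
  proof (rule summable_norm_cancel, rule summable_comparison_test'[OF summable_mult[OF \<beta>, of L], where N=0])
    show "norm (norm (\<beta> m * g m)) \<le> L * (norm (\<beta> m) * fact m)" for m
      using mult_left_mono[OF L[of m] norm_ge_zero[of "\<beta> m"]] by (simp add: norm_mult ac_simps)
  qed
qed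

lemma norm_coef_functional_le:
  fixes \<beta> g :: "nat \<Rightarrow> 'k::{real_normed_field, banach}"
  assumes \<beta>: "summable (\<lambda>m. norm (\<beta> m) * fact m)" and g: "g \<in> unit_ball"
  shows "norm (coef_functional \<beta> g) \<le> (\<Sum>m. norm (\<beta> m) * fact m)"
  unfolding coef_functional_def
proof (rule norm_suminf_le[OF _ \<beta>])
  show "norm (\<beta> m * g m) \<le> norm (\<beta> m) * fact m" for m
    using g unfolding Lip0_ball_dM_iff by (simp add: norm_mult mult_left_mono)
qed

lemma coef_functional_finite_support:
  assumes "finite {m. \<beta> m \<noteq> 0}"
  shows "coef_functional \<beta> = (\<lambda>g. \<Sum>x\<in>{m. \<beta> m \<noteq> 0}. \<beta> x * delta x g)"
  unfolding coef_functional_def delta_def using assms by (intro ext suminf_finite) auto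

lemma delta_sum_eq_coef_functional:
  assumes "finite S"
  shows "(\<Sum>x\<in>S. c x * delta x g) = coef_functional (\<lambda>x. if x \<in> S then c x else 0) g"
proof -
  have "(\<Sum>m. (if m \<in> S then c m else 0) * g m) = (\<Sum>m\<in>S. (if m \<in> S then c m else 0) * g m)"
    using assms by (intro suminf_finite) auto
  then show "(\<Sum>x\<in>S. c x * delta x g) = coef_functional (\<lambda>x. if x \<in> S then c x else 0) g"
    by (simp add: coef_functional_def delta_def)
qed

lemma coef_functional_diff:
  fixes \<alpha> \<beta> :: "nat \<Rightarrow> 'k::{real_normed_field, banach}"
  assumes "summable (\<lambda>m. norm (\<alpha> m) * fact m)" "summable (\<lambda>m. norm (\<beta> m) * fact m)"
    and "g \<in> Lip0 dM 0"
  shows "coef_functional \<alpha> g - coef_functional \<beta> g = coef_functional (\<lambda>m. \<alpha> m - \<beta> m) g"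
  unfolding coef_functional_def
  using suminf_diff[OF coef_functional_summable[OF assms(1,3)] coef_functional_summable[OF assms(2,3)]]
  by (simp add: left_diff_distrib)

lemma coef_functional_Lip0_dual:
  fixes \<beta> :: "nat \<Rightarrow> 'k::{real_normed_field, banach}"
  assumes \<beta>: "summable (\<lambda>m. norm (\<beta> m) * fact m)"
  shows "coef_functional \<beta> \<in> Lip0_dual dM 0"
  unfolding Lip0_dual_def
proof (intro CollectI conjI ballI allI)
  fix g h :: "nat \<Rightarrow> 'k" and a b :: 'k
  assume "g \<in> Lip0 dM 0" "h \<in> Lip0 dM 0"
  then have g: "summable (\<lambda>m. \<beta> m * g m)" and h: "summable (\<lambda>m. \<beta> m * h m)"
    using coef_functional_summable[OF \<beta>] by blast+
  have "coef_functional \<beta> (\<lambda>x. a * g x + b * h x) = (\<Sum>m. a * (\<beta> m * g m) + b * (\<beta> m * h m))"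
    unfolding coef_functional_def by (simp add: algebra_simps)
  also have "\<dots> = a * coef_functional \<beta> g + b * coef_functional \<beta> h"
    unfolding coef_functional_def
    using suminf_add[OF summable_mult[OF g, of a] summable_mult[OF h, of b]]
    by (simp add: suminf_mult[OF g] suminf_mult[OF h])
  finally show "coef_functional \<beta> (\<lambda>x. a * g x + b * h x) = a * coef_functional \<beta> g + b * coef_functional \<beta> h" .
next
  show "bdd_above ((\<lambda>g. norm (coef_functional \<beta> g)) ` unit_ball)"
    using norm_coef_functional_le[OF \<beta>] by (intro bdd_aboveI2)
qed

lemma dnorm_coef_functional_minus_partial_sum:
  fixes \<beta> :: "nat \<Rightarrow> 'k::{real_normed_field, banach}"
  assumes \<beta>: "summable (\<lambda>m. norm (\<beta> m) * fact m)"
  shows "dnorm dM 0 (\<lambda>g. coef_functional \<beta> g - (\<Sum>x\<in>{..<N}. \<beta> x * delta x g))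
    \<le> (\<Sum>i. norm (\<beta> (i + N)) * fact (i + N))"
proof (rule dnorm_le)
  fix g :: "nat \<Rightarrow> 'k" assume g: "g \<in> unit_ball"
  have "summable (\<lambda>m. \<beta> m * g m)"
    using g Lip0_ball_subset by (intro coef_functional_summable[OF \<beta>]) blast
  then have "coef_functional \<beta> g - (\<Sum>x\<in>{..<N}. \<beta> x * delta x g)
      = coef_functional (\<lambda>i. \<beta> (i + N)) (\<lambda>i. g (i + N))"
    unfolding coef_functional_def delta_def
    using suminf_split_initial_segment[of "\<lambda>m. \<beta> m * g m" N] by simp
  also have "norm \<dots> \<le> (\<Sum>i. norm (\<beta> (i + N)) * fact (i + N))"
    unfolding coef_functional_def
  proof (rule norm_suminf_le)
    show "norm (\<beta> (i + N) * g (i + N)) \<le> norm (\<beta> (i + N)) * fact (i + N)" for i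
      using g unfolding Lip0_ball_dM_iff by (simp add: norm_mult mult_left_mono)
    show "summable (\<lambda>i. norm (\<beta> (i + N)) * fact (i + N))"
      using summable_ignore_initial_segment[OF \<beta>] .
  qed
  finally show "norm (coef_functional \<beta> g - (\<Sum>x\<in>{..<N}. \<beta> x * delta x g))
      \<le> (\<Sum>i. norm (\<beta> (i + N)) * fact (i + N))" .
qed

lemma coef_functional_free_space:
  fixes \<beta> :: "nat \<Rightarrow> 'k::{real_normed_field, banach}"
  assumes \<beta>: "summable (\<lambda>m. norm (\<beta> m) * fact m)"
  shows "coef_functional \<beta> \<in> free_space dM 0"
proof -
  have "\<exists>\<psi>\<in>delta_span. dnorm dM 0 (\<lambda>g. coef_functional \<beta> g - \<psi> g) < e" if "0 < e" for e
  proof -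
    obtain N where "norm (\<Sum>i. norm (\<beta> (i + N)) * fact (i + N)) < e"
      using suminf_exist_split[OF \<open>0 < e\<close> \<beta>] by blast
    then show ?thesis
      using dnorm_coef_functional_minus_partial_sum[OF \<beta>, of N] unfolding delta_span_def
      by (intro bexI[of _ "\<lambda>g. \<Sum>x\<in>{..<N}. \<beta> x * delta x g"]) auto
  qed
  with coef_functional_Lip0_dual[OF \<beta>] show ?thesis
    unfolding free_space_def by blast
qed

lemma inverse_sgn_mult: "inverse (sgn a) * a = of_real (norm a)" for a :: "'k::real_normed_field"
proof (cases "a = 0")
  case False
  have "sgn a = of_real (inverse (norm a)) * a"
    by (simp add: sgn_div_norm scaleR_conv_of_real)
  with False show ?thesis
    by (simp add: nonzero_inverse_mult_distrib of_real_inverse)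
qed simp

lemma fact_weighted_norm_le_dnorm:
  fixes \<beta> :: "nat \<Rightarrow> 'k::{real_normed_field, banach}"
  assumes \<beta>: "summable (\<lambda>m. norm (\<beta> m) * fact m)"
  shows "(\<Sum>m. norm (\<beta> (Suc m)) * fact (Suc m)) \<le> dnorm dM 0 (coef_functional \<beta>)"
proof -
  define h :: "nat \<Rightarrow> 'k" where "h m = (if m = 0 then 0 else inverse (sgn (\<beta> m)) * of_real (fact m))" for m
  have sw: "summable (\<lambda>m. norm (\<beta> (Suc m)) * fact (Suc m))"
    by (subst summable_Suc_iff) (rule \<beta>)
  have h: "h \<in> unit_ball"
    unfolding Lip0_ball_dM_iff h_def by (simp add: norm_mult norm_inverse norm_sgn)
  have "summable (\<lambda>m. \<beta> m * h m)"
    using h Lip0_ball_subset by (intro coef_functional_summable[OF \<beta>]) blast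
  from suminf_split_head[OF this] have "coef_functional \<beta> h = (\<Sum>m. \<beta> (Suc m) * h (Suc m))"
    unfolding coef_functional_def by (simp add: h_def[of 0])
  also have "\<dots> = (\<Sum>m. of_real (norm (\<beta> (Suc m)) * fact (Suc m)))"
  proof -
    have "\<beta> (Suc m) * h (Suc m) = (inverse (sgn (\<beta> (Suc m))) * \<beta> (Suc m)) * of_real (fact (Suc m))" for m
      unfolding h_def by (simp del: fact_Suc add: ac_simps)
    then show ?thesis
      by (simp only: inverse_sgn_mult of_real_mult)
  qed
  also have "\<dots> = of_real (\<Sum>m. norm (\<beta> (Suc m)) * fact (Suc m))"
    by (rule suminf_of_real[symmetric, OF sw])
  finally have "norm (coef_functional \<beta> h) = (\<Sum>m. norm (\<beta> (Suc m)) * fact (Suc m))"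
    using suminf_nonneg[OF sw] by simp
  moreover have "norm (coef_functional \<beta> h) \<le> dnorm dM 0 (coef_functional \<beta>)"
    using coef_functional_free_space[OF \<beta>] h
    by (intro norm_le_dnorm Lip0_dual_ball_bounded free_space_Lip0_dual)
  ultimately show ?thesis
    by linarith
qed

lemma free_space_approx_coef:
  assumes "\<phi> \<in> free_space dM 0" "0 < e"
  shows "\<exists>\<gamma>. finite {m. \<gamma> m \<noteq> 0} \<and> dnorm dM 0 (\<lambda>g. \<phi> g - coef_functional \<gamma> g) < e"
proof -
  obtain S c where "finite S" "dnorm dM 0 (\<lambda>g. \<phi> g - (\<Sum>x\<in>S. c x * delta x g)) < e"
    using free_space_approx[OF assms] unfolding delta_span_def by blast
  moreover have "finite {m. (if m \<in> S then c m else 0) \<noteq> 0}"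
    using \<open>finite S\<close> by (rule finite_subset[rotated]) auto
  ultimately show ?thesis
    by (auto simp: delta_sum_eq_coef_functional)
qed

lemma free_space_coef_approx_bounded:
  fixes \<phi> :: "(nat \<Rightarrow> 'k::{real_normed_field, banach}) \<Rightarrow> 'k"
  assumes \<phi>: "\<phi> \<in> free_space dM 0" "dnorm dM 0 \<phi> \<le> 1" and e: "0 < e" "e \<le> 1"
  obtains \<gamma> where "finite {m. \<gamma> m \<noteq> 0}" "dnorm dM 0 (\<lambda>g. \<phi> g - coef_functional \<gamma> g) < e"
    "\<And>N. (\<Sum>m<N. norm (\<gamma> (Suc m)) * (real (Suc m) * fact m)) \<le> 2"
proof -
  obtain \<gamma> where fin: "finite {m. \<gamma> m \<noteq> 0}"
    and approx: "dnorm dM 0 (\<lambda>g. \<phi> g - coef_functional \<gamma> g) < e"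
    using free_space_approx_coef[OF \<phi>(1) e(1)] by blast
  have summable: "summable (\<lambda>m. norm (\<gamma> m) * fact m)"
    by (rule summable_finite[OF fin]) auto
  have "(\<lambda>g. \<phi> g - coef_functional \<gamma> g) \<in> free_space dM 0"
    by (rule free_space_diff[OF \<phi>(1) coef_functional_free_space[OF summable]])
  then have bounded: "ball_bounded \<phi>" "ball_bounded (\<lambda>g. \<phi> g - coef_functional \<gamma> g)"
    using \<phi>(1) by (simp_all add: Lip0_dual_ball_bounded free_space_Lip0_dual)
  have "(\<Sum>m<N. norm (\<gamma> (Suc m)) * (real (Suc m) * fact m)) \<le> 2" for N
  proof -
    have "summable (\<lambda>m. norm (\<gamma> (Suc m)) * fact (Suc m))"
      by (subst summable_Suc_iff) (rule summable)
    then have "(\<Sum>m<N. norm (\<gamma> (Suc m)) * (real (Suc m) * fact m)) \<le> (\<Sum>m. norm (\<gamma> (Suc m)) * fact (Suc m))"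
      unfolding fact_Suc[symmetric] by (rule sum_le_suminf) auto
    also have "\<dots> \<le> dnorm dM 0 (coef_functional \<gamma>)"
      by (rule fact_weighted_norm_le_dnorm[OF summable])
    also have "\<dots> \<le> dnorm dM 0 \<phi> + dnorm dM 0 (\<lambda>g. \<phi> g - coef_functional \<gamma> g)"
      using dnorm_diff_le[OF bounded] by simp
    also have "\<dots> \<le> 2"
      using \<phi>(2) approx e(2) by linarith
    finally show ?thesis .
  qed
  with fin approx show thesis
    by (rule that)
qed

lemma free_space_seq_coef_approx:
  fixes s :: "nat \<Rightarrow> (nat \<Rightarrow> 'k::{real_normed_field, banach}) \<Rightarrow> 'k"
  assumes s: "\<forall>k. s k \<in> free_space dM 0 \<and> dnorm dM 0 (s k) \<le> 1"
  obtains \<gamma> where "\<And>k. finite {m. \<gamma> k m \<noteq> 0}"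
    "\<And>k. dnorm dM 0 (\<lambda>g. s k g - coef_functional (\<gamma> k) g) < inverse (real (Suc k))"
    "\<And>k N. (\<Sum>m<N. norm (\<gamma> k (Suc m)) * (real (Suc m) * fact m)) \<le> 2"
proof -
  have "\<forall>k. \<exists>\<gamma>. finite {m. \<gamma> m \<noteq> 0} \<and> dnorm dM 0 (\<lambda>g. s k g - coef_functional \<gamma> g) < inverse (real (Suc k))
      \<and> (\<forall>N. (\<Sum>m<N. norm (\<gamma> (Suc m)) * (real (Suc m) * fact m)) \<le> 2)"
  proof
    fix k
    have "0 < inverse (real (Suc k))" "inverse (real (Suc k)) \<le> 1"
      by (simp_all add: inverse_le_1_iff)
    then show "\<exists>\<gamma>. finite {m. \<gamma> m \<noteq> 0} \<and> dnorm dM 0 (\<lambda>g. s k g - coef_functional \<gamma> g) < inverse (real (Suc k))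
        \<and> (\<forall>N. (\<Sum>m<N. norm (\<gamma> (Suc m)) * (real (Suc m) * fact m)) \<le> 2)"
      using free_space_coef_approx_bounded[of "s k" "inverse (real (Suc k))"] s by blast
  qed
  from choice[OF this] show thesis
    using that by blast
qed

section \<open>Compactness of the linearization\<close>

lemma linearization_bound:
  assumes T: "is_linearization dM 0 f T"
  obtains C where "0 \<le> C" "\<And>\<phi> \<psi> g. \<phi> \<in> free_space dM 0 \<Longrightarrow> \<psi> \<in> free_space dM 0 \<Longrightarrow> g \<in> unit_ball
      \<Longrightarrow> norm (T \<phi> g - T \<psi> g) \<le> C * dnorm dM 0 (\<lambda>g. \<phi> g - \<psi> g)"
proof -
  obtain C where C: "\<And>\<phi>. \<phi> \<in> free_space dM 0 \<Longrightarrow> dnorm dM 0 (T \<phi>) \<le> C * dnorm dM 0 \<phi>"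
    using T unfolding is_linearization_def by blast
  have "norm (T \<phi> g - T \<psi> g) \<le> max C 0 * dnorm dM 0 (\<lambda>g. \<phi> g - \<psi> g)"
    if \<phi>: "\<phi> \<in> free_space dM 0" and \<psi>: "\<psi> \<in> free_space dM 0" and g: "g \<in> unit_ball" for \<phi> \<psi> g
  proof -
    let ?\<delta> = "\<lambda>g. \<phi> g - \<psi> g"
    have \<delta>: "?\<delta> \<in> free_space dM 0"
      by (rule free_space_diff[OF \<phi> \<psi>])
    then have T\<delta>: "T ?\<delta> \<in> free_space dM 0"
      using T unfolding is_linearization_def by blast
    have "T \<phi> g - T \<psi> g = T ?\<delta> g"
      using linearization_linear[OF T \<phi> \<psi>, of g 1 "-1"] g Lip0_ball_subset by auto
    also have "norm \<dots> \<le> dnorm dM 0 (T ?\<delta>)"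
      using T\<delta> g by (intro norm_le_dnorm Lip0_dual_ball_bounded free_space_Lip0_dual)
    also have "\<dots> \<le> C * dnorm dM 0 ?\<delta>"
      using C[OF \<delta>] .
    also have "\<dots> \<le> max C 0 * dnorm dM 0 ?\<delta>"
      using \<delta> by (intro mult_right_mono dnorm_nonneg Lip0_dual_ball_bounded free_space_Lip0_dual) auto
    finally show ?thesis .
  qed
  then show thesis
    by (rule that[of "max C 0", OF max.cobounded2])
qed

lemma linearization_fM_coef_functional:
  fixes T :: "((nat \<Rightarrow> 'k::{real_normed_field, banach}) \<Rightarrow> 'k) \<Rightarrow> ((nat \<Rightarrow> 'k) \<Rightarrow> 'k)"
  assumes T: "is_linearization dM 0 fM T" and fin: "finite {m. \<gamma> m \<noteq> 0}" and g: "g \<in> Lip0 dM 0"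
  shows "T (coef_functional \<gamma>) g = coef_functional (\<lambda>m. \<gamma> (Suc m)) g"
proof -
  have g0: "g 0 = 0"
    using g by (simp add: Lip0_def)
  have "T (coef_functional \<gamma>) g = (\<Sum>x\<in>{m. \<gamma> m \<noteq> 0}. \<gamma> x * g (fM x))"
    unfolding coef_functional_finite_support[OF fin] by (rule linearization_delta_sum[OF T fin g])
  also have "\<dots> = (\<Sum>x. \<gamma> x * g (fM x))"
    using fin by (intro suminf_finite[symmetric]) auto
  also have "\<dots> = (\<Sum>m. \<gamma> (Suc m) * g (fM (Suc m)))"
  proof -
    have "summable (\<lambda>x. \<gamma> x * g (fM x))"
      by (rule summable_finite[OF fin]) auto
    from suminf_split_head[OF this] show ?thesis
      using g0 by (simp add: fM_def)
  qed
  finally show ?thesis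
    by (simp add: coef_functional_def fM_def)
qed

lemma norm_linearization_fM_diff_le:
  fixes T :: "((nat \<Rightarrow> 'k::{real_normed_field, banach}) \<Rightarrow> 'k) \<Rightarrow> ((nat \<Rightarrow> 'k) \<Rightarrow> 'k)"
  assumes T: "is_linearization dM 0 fM T" and fin: "finite {m. \<gamma> m \<noteq> 0}"
    and b: "summable (\<lambda>m. norm (b m) * fact m)"
    and diff: "summable (\<lambda>m. norm (\<gamma> (Suc m) - b m) * fact m)" and g: "g \<in> unit_ball"
  shows "norm (T \<phi> g - coef_functional b g)
    \<le> norm (T \<phi> g - T (coef_functional \<gamma>) g) + (\<Sum>m. norm (\<gamma> (Suc m) - b m) * fact m)"
proof -
  have gL: "g \<in> Lip0 dM 0"
    using g Lip0_ball_subset by blast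
  have "summable (\<lambda>m. norm (\<gamma> (Suc m)) * fact m)"
    using fin by (intro summable_finite[of "Suc -` {m. \<gamma> m \<noteq> 0}"] finite_vimageI) auto
  then have "T (coef_functional \<gamma>) g - coef_functional b g = coef_functional (\<lambda>m. \<gamma> (Suc m) - b m) g"
    using linearization_fM_coef_functional[OF T fin gL] coef_functional_diff[OF _ b gL] by simp
  then have "norm (T \<phi> g - coef_functional b g)
      = norm ((T \<phi> g - T (coef_functional \<gamma>) g) + coef_functional (\<lambda>m. \<gamma> (Suc m) - b m) g)"
    by (simp add: algebra_simps)
  also have "\<dots> \<le> norm (T \<phi> g - T (coef_functional \<gamma>) g) + norm (coef_functional (\<lambda>m. \<gamma> (Suc m) - b m) g)"
    by (rule norm_triangle_ineq)
  also have "\<dots> \<le> norm (T \<phi> g - T (coef_functional \<gamma>) g) + (\<Sum>m. norm (\<gamma> (Suc m) - b m) * fact m)"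
    using norm_coef_functional_le[OF diff g] by simp
  finally show ?thesis .
qed

theorem linearization_fM_compact:
  fixes T :: "((nat \<Rightarrow> 'k::{real_normed_field, banach, heine_borel}) \<Rightarrow> 'k) \<Rightarrow> ((nat \<Rightarrow> 'k) \<Rightarrow> 'k)"
  assumes T: "is_linearization dM 0 fM T"
  shows "compact_op dM 0 T"
  unfolding compact_op_def
proof (intro allI impI)
  fix s :: "nat \<Rightarrow> (nat \<Rightarrow> 'k) \<Rightarrow> 'k"
  assume s: "\<forall>n. s n \<in> free_space dM 0 \<and> dnorm dM 0 (s n) \<le> 1"
  obtain C where "0 \<le> C" and C: "\<And>\<phi> \<psi> g. \<phi> \<in> free_space dM 0 \<Longrightarrow> \<psi> \<in> free_space dM 0 \<Longrightarrow> g \<in> unit_ball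
      \<Longrightarrow> norm (T \<phi> g - T \<psi> g) \<le> C * dnorm dM 0 (\<lambda>g. \<phi> g - \<psi> g)"
    by (rule linearization_bound[OF T]) (rule that)
  obtain \<gamma> where fin: "\<And>k. finite {m. \<gamma> k m \<noteq> 0}"
    and approx: "\<And>k. dnorm dM 0 (\<lambda>g. s k g - coef_functional (\<gamma> k) g) < inverse (real (Suc k))"
    and bound: "\<And>k N. (\<Sum>m<N. norm (\<gamma> k (Suc m)) * (real (Suc m) * fact m)) \<le> 2"
    using free_space_seq_coef_approx[OF s] by blast
  have \<gamma>_free: "coef_functional (\<gamma> k) \<in> free_space dM 0" for k
    by (rule coef_functional_free_space, rule summable_finite[OF fin]) auto
  obtain r b where r: "strict_mono r" and b: "summable (\<lambda>m. norm (b m) * fact m)"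
    and diff: "\<And>k. summable (\<lambda>m. norm (\<gamma> (r k) (Suc m) - b m) * fact m)"
    and diff_tendsto: "(\<lambda>k. \<Sum>m. norm (\<gamma> (r k) (Suc m) - b m) * fact m) \<longlonglongrightarrow> 0"
    using weighted_l1_compact[of "\<lambda>k m. \<gamma> k (Suc m)" fact 2, OF bound fact_gt_zero] by blast
  have "norm (T (s (r k)) g - coef_functional b g)
      \<le> C * inverse (real (Suc (r k))) + (\<Sum>m. norm (\<gamma> (r k) (Suc m) - b m) * fact m)"
    if g: "g \<in> unit_ball" for k g
  proof -
    have "norm (T (s (r k)) g - T (coef_functional (\<gamma> (r k))) g) \<le> C * inverse (real (Suc (r k)))"
      using C[OF _ \<gamma>_free g, of "s (r k)"] s mult_left_mono[OF less_imp_le[OF approx] \<open>0 \<le> C\<close>]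
      by (meson order_trans)
    then show ?thesis
      using norm_linearization_fM_diff_le[OF T fin b diff[of k] g, of "s (r k)"] by linarith
  qed
  moreover have "(\<lambda>k. C * inverse (real (Suc (r k))) + (\<Sum>m. norm (\<gamma> (r k) (Suc m) - b m) * fact m))
      \<longlonglongrightarrow> 0"
    using tendsto_mult_right_zero[OF LIMSEQ_subseq_LIMSEQ[OF LIMSEQ_inverse_real_of_nat r], of C]
      tendsto_add_zero diff_tendsto by (auto simp: o_def)
  ultimately have "(\<lambda>k. dnorm dM 0 (\<lambda>g. T (s (r k)) g - coef_functional b g)) \<longlonglongrightarrow> 0"
    by (rule dnorm_tendsto_zero)
  then show "\<exists>r \<psi>. strict_mono r \<and> \<psi> \<in> free_space dM 0
      \<and> (\<lambda>n. dnorm dM 0 (\<lambda>g. T (s (r n)) g - \<psi> g)) \<longlonglongrightarrow> 0"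
    using r coef_functional_free_space[OF b] by blast
qed

theorem mainTheorem13:
  shows "lipschitz_map dM fM
    \<and> fM ` UNIV = UNIV
    \<and> \<not> totally_bounded_d dM (fM ` UNIV)
    \<and> (\<forall>T :: ((nat \<Rightarrow> real) \<Rightarrow> real) \<Rightarrow> ((nat \<Rightarrow> real) \<Rightarrow> real).
          is_linearization dM 0 fM T \<longrightarrow> compact_op dM 0 T)
    \<and> (\<forall>T :: ((nat \<Rightarrow> complex) \<Rightarrow> complex) \<Rightarrow> ((nat \<Rightarrow> complex) \<Rightarrow> complex).
          is_linearization dM 0 fM T \<longrightarrow> compact_op dM 0 T)"
  using lipschitz_map_fM surj_fM not_totally_bounded_dM
    linearization_fM_compact[where 'k = real] linearization_fM_compact[where 'k = complex]
  by auto

end
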